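(* Let $y$ be the solution of the problem $\varepsilon^2 y''(x)=f(x,y)$ on $(0,1)$, $y(0)=y(1)=0$, with $f$ and the Shishkin mesh $\{x_i\}_{i=0}^N$ as described in the context, and let $G$ be the discrete operator defined in the context. Assume that $\varepsilon\leqslant C_0/N$ for some constant $C_0>0$. Then there is a constant $C>0$ independent of $N$ and $\varepsilon$ such that, for the indices $i\in\{N/4,\ldots,N/2-1\}$ with $x_{i-1},x_i,x_{i+1}\in[x_{N/4},1/2]$, $$|(Gy)_i|\leqslant \frac{C}{N^2},$$ where $(Gy)_i$ denotes the $i$-th component of $G$ applied to the vector $(y(x_0),\ldots,y(x_N))^T$.
   Context: Problem: $\varepsilon^2y''(x)=f(x,y)$ on $(0,1)$, $y(0)=y(1)=0$, where $\varepsilon>0$ is a small parameter, $f\in C^k([0,1]\times\mathbb{R})$ for some $k\geq 2$, and $f_y=\partial f/\partial y\geq m>0$ on $[0,1]\times\mathbb{R}$ for a constant $m$; this problem has a unique solution $y$. Shishkin mesh: $N$ is a positive integer divisible by 4, $\lambda=\min\{1/4,\,2\varepsilon\ln N/\sqrt{m}\}$, and it is assumed that $\lambda=2\varepsilon\ln N/\sqrt{m}$. The mesh $0=x_0<x_1<\cdots<x_N=1$ is equidistant on each of $[0,\lambda]$ (with $N/4$ subintervals), $[\lambda,1-\lambda]$ (with $N/2$ subintervals) and $[1-\lambda,1]$ (with $N/4$ subintervals); thus $x_{N/4}=\lambda$, $x_{3N/4}=1-\lambda$, $x_{N/2}=1/2$, subintervals in $[0,\lambda]\cup[1-\lambda,1]$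 have length $4\lambda/N$ and those in $[\lambda,1-\lambda]$ have length $2(1-2\lambda)/N$. Scheme: $\gamma$ is a constant with $\gamma\geq f_y$, and $\beta=\sqrt{\gamma}/\varepsilon$. For $i=1,\ldots,N$ let $\ell_i=x_i-x_{i-1}$, $d_i=\beta/\tanh(\beta\ell_i)$, $a_i=\beta/\sinh(\beta\ell_i)$, $\Delta d_i=d_i-a_i$. For $v=(v_0,\ldots,v_N)^T\in\mathbb{R}^{N+1}$ write $f_j=f(x_j,v_j)$ and define $Gv\in\mathbb{R}^{N+1}$ by $(Gv)_0=v_0$, $(Gv)_N=v_N$ and, for $i=1,\ldots,N-1$, $$(Gv)_i=\frac{\gamma}{\Delta d_i+\Delta d_{i+1}}\Big[(3a_i+d_i+\Delta d_{i+1})(v_{i-1}-v_i)-(3a_{i+1}+d_{i+1}+\Delta d_i)(v_i-v_{i+1})-\frac{f_{i-1}+2f_i+f_{i+1}}{\gamma}(\Delta d_i+\Delta d_{i+1})\Big].$$ *)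

theory Defs
  imports "HOL-Analysis.Analysis"
begin

fun Ck_on :: "nat \<Rightarrow> (real \<times> real) set \<Rightarrow> (real \<times> real \<Rightarrow> real) \<Rightarrow> bool" where
  "Ck_on 0 S g = continuous_on S g"
| "Ck_on (Suc k) S g =
     (\<exists>gx gy. (\<forall>p\<in>S. (g has_derivative (\<lambda>(h1, h2). gx p * h1 + gy p * h2)) (at p within S))
              \<and> Ck_on k S gx \<and> Ck_on k S gy)"

definition shishkin_lambda :: "real \<Rightarrow> real \<Rightarrow> nat \<Rightarrow> real" where
  "shishkin_lambda m \<epsilon> N = min (1/4) (2 * \<epsilon> * ln (real N) / sqrt m)"

text \<open>Shishkin mesh points x_i with transition point lam: N/4 equal steps on [0,lam],
  N/2 on [lam,1-lam], N/4 on [1-lam,1].\<close>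
definition shishkin_mesh :: "real \<Rightarrow> nat \<Rightarrow> nat \<Rightarrow> real" where
  "shishkin_mesh lam N i =
     (if 4 * i \<le> N then 4 * lam * real i / real N
      else if 4 * i \<le> 3 * N then lam + 2 * (1 - 2 * lam) * (real i - real N / 4) / real N
      else 1 - lam + 4 * lam * (real i - 3 * real N / 4) / real N)"

definition mesh_len :: "(nat \<Rightarrow> real) \<Rightarrow> nat \<Rightarrow> real" where
  "mesh_len x i = x i - x (i - 1)"

definition coef_d :: "(nat \<Rightarrow> real) \<Rightarrow> real \<Rightarrow> nat \<Rightarrow> real" where
  "coef_d x \<beta> i = \<beta> / tanh (\<beta> * mesh_len x i)"

definition coef_a :: "(nat \<Rightarrow> real) \<Rightarrow> real \<Rightarrow> nat \<Rightarrow> real" where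
  "coef_a x \<beta> i = \<beta> / sinh (\<beta> * mesh_len x i)"

definition coef_Dd :: "(nat \<Rightarrow> real) \<Rightarrow> real \<Rightarrow> nat \<Rightarrow> real" where
  "coef_Dd x \<beta> i = coef_d x \<beta> i - coef_a x \<beta> i"

definition G_op :: "(nat \<Rightarrow> real) \<Rightarrow> nat \<Rightarrow> real \<Rightarrow> real \<Rightarrow> (real \<Rightarrow> real \<Rightarrow> real)
                     \<Rightarrow> (nat \<Rightarrow> real) \<Rightarrow> nat \<Rightarrow> real" where
  "G_op x N \<epsilon> \<gamma> f v i =
     (let \<beta> = sqrt \<gamma> / \<epsilon>;
          d = coef_d x \<beta>; a = coef_a x \<beta>; Dd = coef_Dd x \<beta>;
          fv = (\<lambda>j. f (x j) (v j))
      in if i = 0 then v 0 else if i = N then v N else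
         \<gamma> / (Dd i + Dd (i + 1)) *
           ((3 * a i + d i + Dd (i + 1)) * (v (i - 1) - v i)
            - (3 * a (i + 1) + d (i + 1) + Dd i) * (v i - v (i + 1))
            - (fv (i - 1) + 2 * fv i + fv (i + 1)) / \<gamma> * (Dd i + Dd (i + 1))))"

end

theory Submission
  imports Defs
begin

text \<open>
  On the coarse part \<open>[\<lambda>, 1/2]\<close> of the Shishkin mesh the step \<open>h\<close> is uniform and of order \<open>1/N\<close>, and
  \<open>\<epsilon> \<le> C\<^sub>0/N\<close> keeps \<open>\<beta>h\<close> bounded below. There \<open>G\<close> collapses to
  \<open>\<gamma> coth\<^sup>2(\<beta>h/2) (y(x-h) - 2y(x) + y(x+h)) - (f(x-h) + 2f(x) + f(x+h))\<close>, and both parts are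
  \<open>O(N\<^sup>-\<^sup>2)\<close>. A barrier argument with \<open>exp(-\<surd>m x/\<epsilon>) + exp(-\<surd>m (1-x)/\<epsilon>)\<close> shows that \<open>y\<close>
  differs from the reduced solution \<open>y\<^sub>0\<close> (\<open>f(x, y\<^sub>0(x)) = 0\<close>) by \<open>O(\<epsilon>\<^sup>2 + N\<^sup>-\<^sup>2)\<close> away from the
  layers, by the choice of \<open>\<lambda>\<close>. Since \<open>y\<^sub>0\<close> is \<open>C\<^sup>2\<close> by implicit differentiation, its second
  differences are \<open>O(h\<^sup>2)\<close>, and \<open>|f(x, y)| \<le> \<gamma> |y - y\<^sub>0|\<close>.
\<close>

lemma Ck_on_imp_continuous_on:
  assumes "Ck_on k S g"
  shows "continuous_on S g"
proof (cases k)
  case 0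
  then show ?thesis using assms by simp
next
  case (Suc j)
  then obtain gx gy where "\<forall>p\<in>S. (g has_derivative (\<lambda>(h1, h2). gx p * h1 + gy p * h2)) (at p within S)"
    using assms by auto
  then show ?thesis
    unfolding continuous_on_eq_continuous_within using has_derivative_continuous by blast
qed

lemma Ck_on_SucD: "Ck_on (Suc k) S g \<Longrightarrow> Ck_on k S g"
proof (induction k arbitrary: g)
  case 0
  then have "continuous_on S g" by (rule Ck_on_imp_continuous_on)
  then show ?case by simp
next
  case (Suc k)
  from Suc.prems obtain gx gy
    where d: "\<forall>p\<in>S. (g has_derivative (\<lambda>(h1, h2). gx p * h1 + gy p * h2)) (at p within S)"
      and "Ck_on (Suc k) S gx" "Ck_on (Suc k) S gy"
    by (simp only: Ck_on.simps(2)) blast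
  then have "Ck_on k S gx" "Ck_on k S gy" using Suc.IH by blast+
  then show ?case unfolding Ck_on.simps(2) using d by blast
qed

lemma Ck_on_mono: "Ck_on k S g \<Longrightarrow> j \<le> k \<Longrightarrow> Ck_on j S g"
proof (induction k)
  case (Suc k)
  show ?case
  proof (cases "j = Suc k")
    case False
    with Suc.prems have "j \<le> k" by simp
    with Suc.IH Ck_on_SucD[OF Suc.prems(1)] show ?thesis by blast
  qed (use Suc.prems in simp)
qed simp

lemma Ck_on_2E:
  assumes "Ck_on 2 S g"
  obtains gx gy gxx gxy gyx gyy where
    "\<And>p. p \<in> S \<Longrightarrow> (g has_derivative (\<lambda>(h1, h2). gx p * h1 + gy p * h2)) (at p within S)"
    "\<And>p. p \<in> S \<Longrightarrow> (gx has_derivative (\<lambda>(h1, h2). gxx p * h1 + gxy p * h2)) (at p within S)"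
    "\<And>p. p \<in> S \<Longrightarrow> (gy has_derivative (\<lambda>(h1, h2). gyx p * h1 + gyy p * h2)) (at p within S)"
    "continuous_on S gxx" "continuous_on S gxy" "continuous_on S gyx" "continuous_on S gyy"
proof -
  obtain gx gy where
    "\<forall>p\<in>S. (g has_derivative (\<lambda>(h1, h2). gx p * h1 + gy p * h2)) (at p within S)"
    and gx: "Ck_on (Suc 0) S gx" and gy: "Ck_on (Suc 0) S gy"
    using assms unfolding numeral_2_eq_2 Ck_on.simps(2) by blast
  moreover obtain gxx gxy where
    "\<forall>p\<in>S. (gx has_derivative (\<lambda>(h1, h2). gxx p * h1 + gxy p * h2)) (at p within S)"
    "continuous_on S gxx" "continuous_on S gxy"
    using gx unfolding Ck_on.simps by blast
  moreover obtain gyx gyy where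
    "\<forall>p\<in>S. (gy has_derivative (\<lambda>(h1, h2). gyx p * h1 + gyy p * h2)) (at p within S)"
    "continuous_on S gyx" "continuous_on S gyy"
    using gy unfolding Ck_on.simps by blast
  ultimately show thesis
    using that[of gx gy gxx gxy gyx gyy] by blast
qed

lemma DERIV2_nonpos_at_interior_max:
  fixes w w' :: "real \<Rightarrow> real"
  assumes "a < x" "x < b"
    and w': "\<And>t. t \<in> {a<..<b} \<Longrightarrow> (w has_real_derivative w' t) (at t)"
    and w'': "(w' has_real_derivative w'') (at x)"
    and max: "\<And>t. t \<in> {a<..<b} \<Longrightarrow> w t \<le> w x"
  shows "w'' \<le> 0"
proof (rule ccontr)
  assume "\<not> w'' \<le> 0"
  have "w' x = 0"
  proof (rule DERIV_local_max[OF w'[of x]])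
    show "x \<in> {a<..<b}" "0 < min (x - a) (b - x)" using assms by auto
    show "\<forall>y. \<bar>x - y\<bar> < min (x - a) (b - x) \<longrightarrow> w y \<le> w x"
      using max by (auto simp: abs_if split: if_splits)
  qed
  moreover obtain d where "d > 0" and d: "\<And>h. h > 0 \<Longrightarrow> h < d \<Longrightarrow> w' x < w' (x + h)"
    using DERIV_pos_inc_right[OF w''] \<open>\<not> w'' \<le> 0\<close> by auto
  define h where "h = min (d / 2) ((b - x) / 2)"
  have h: "0 < h" "h < d" "x + h < b"
    using \<open>d > 0\<close> \<open>x < b\<close> by (auto simp: h_def min_def field_simps)
  obtain z where z: "x < z" "z < x + h" "w (x + h) - w x = h * w' z"
    using MVT2[of x "x + h" w w'] w' \<open>a < x\<close> h by auto
  ultimately have "w' z > 0" using d[of "z - x"] h by auto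
  then have "h * w' z > 0" using \<open>0 < h\<close> by simp
  then have "w (x + h) > w x" using z by simp
  moreover have "w (x + h) \<le> w x" using max[of "x + h"] \<open>a < x\<close> h by auto
  ultimately show False by simp
qed

lemma nonpos_if_convex_where_pos:
  fixes w w' w'' :: "real \<Rightarrow> real"
  assumes cont: "continuous_on {a..b} w" and "w a \<le> 0" "w b \<le> 0"
    and w': "\<And>t. t \<in> {a<..<b} \<Longrightarrow> (w has_real_derivative w' t) (at t)"
    and w'': "\<And>t. t \<in> {a<..<b} \<Longrightarrow> (w' has_real_derivative w'' t) (at t)"
    and convex_where_pos: "\<And>t. t \<in> {a<..<b} \<Longrightarrow> w t > 0 \<Longrightarrow> w'' t > 0"
    and t: "t \<in> {a..b}"
  shows "w t \<le> 0"
proof (rule ccontr)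
  assume "\<not> w t \<le> 0"
  obtain x where x: "x \<in> {a..b}" and max: "\<And>s. s \<in> {a..b} \<Longrightarrow> w s \<le> w x"
    using continuous_attains_sup[OF compact_Icc _ cont] t by auto
  have "w x > 0" using max[OF t] \<open>\<not> w t \<le> 0\<close> by simp
  with x \<open>w a \<le> 0\<close> \<open>w b \<le> 0\<close> have "x \<in> {a<..<b}"
    by (cases "x = a"; cases "x = b") auto
  then have "w'' x \<le> 0"
    by (intro DERIV2_nonpos_at_interior_max[OF _ _ w' w'']) (auto intro: max)
  with convex_where_pos[OF \<open>x \<in> {a<..<b}\<close> \<open>w x > 0\<close>] show False by simp
qed

lemma second_difference_bound:
  fixes u u' u'' :: "real \<Rightarrow> real"
  assumes h: "0 < h"
    and u': "\<And>t. t \<in> {a - h..a + h} \<Longrightarrow> (u has_real_derivative u' t) (at t)"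
    and u'': "\<And>t. t \<in> {a - h..a + h} \<Longrightarrow> (u' has_real_derivative u'' t) (at t)"
    and K: "\<And>t. t \<in> {a - h..a + h} \<Longrightarrow> \<bar>u'' t\<bar> \<le> K"
  shows "\<bar>u (a - h) - 2 * u a + u (a + h)\<bar> \<le> 2 * K * h\<^sup>2"
proof -
  define \<psi> where "\<psi> s = u (a + s) + u (a - s)" for s
  have "(\<psi> has_real_derivative (u' (a + s) - u' (a - s))) (at s)" if "0 \<le> s" "s \<le> h" for s
    unfolding \<psi>_def using that
    by (auto intro!: derivative_eq_intros DERIV_chain2[OF u'] simp: algebra_simps)
  then obtain s where s: "0 < s" "s < h" "\<psi> h - \<psi> 0 = h * (u' (a + s) - u' (a - s))"
    using MVT2[OF h, of \<psi> "\<lambda>s. u' (a + s) - u' (a - s)"] by auto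
  obtain z where z: "a - s < z" "z < a + s" "u' (a + s) - u' (a - s) = 2 * s * u'' z"
    using MVT2[of "a - s" "a + s" u' u''] u'' s by auto
  have "\<bar>\<psi> h - \<psi> 0\<bar> = h * (2 * s) * \<bar>u'' z\<bar>"
    using s z h by (simp add: abs_mult)
  also have "\<dots> \<le> h * (2 * h) * K"
    using K[of z] z s h by (intro mult_mono) auto
  finally show ?thesis unfolding \<psi>_def by (simp add: power2_eq_square algebra_simps)
qed

lemma abs_second_difference_perturb:
  fixes a b c a0 b0 c0 :: real
  shows "\<bar>a - 2 * b + c\<bar> \<le> \<bar>a0 - 2 * b0 + c0\<bar> + \<bar>a - a0\<bar> + 2 * \<bar>b - b0\<bar> + \<bar>c - c0\<bar>"
  by (simp add: abs_if; smt (verit))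

lemma exp_neg_2_ln: "0 < n \<Longrightarrow> exp (- (2 * ln n)) = 1 / n\<^sup>2"
  for n :: real
proof -
  assume "0 < n"
  then have "exp (2 * ln n) = exp (ln (n\<^sup>2))" by (simp add: ln_realpow)
  also have "\<dots> = n\<^sup>2" using \<open>0 < n\<close> by simp
  finally show ?thesis by (simp add: exp_minus inverse_eq_divide)
qed

lemma cosh_gt_1: "0 < t \<Longrightarrow> 1 < cosh t"
  for t :: real
  using cosh_real_nonneg_less_iff[of 0 t] by simp

lemma G_op_uniform_step:
  fixes x :: "nat \<Rightarrow> real"
  assumes i: "0 < i" "i < N" and len: "mesh_len x i = h" "mesh_len x (i + 1) = h"
    and pos: "0 < h" "0 < \<epsilon>" "0 < \<gamma>"
  defines "\<sigma> \<equiv> sqrt \<gamma> / \<epsilon> * h"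
  shows "G_op x N \<epsilon> \<gamma> f v i =
    \<gamma> * ((1 + cosh \<sigma>) / (cosh \<sigma> - 1)) * (v (i - 1) - 2 * v i + v (i + 1))
    - (f (x (i - 1)) (v (i - 1)) + 2 * f (x i) (v i) + f (x (i + 1)) (v (i + 1)))"
proof -
  define \<beta> where "\<beta> = sqrt \<gamma> / \<epsilon>"
  have "\<beta> > 0" "\<sigma> > 0" using pos by (simp_all add: \<beta>_def \<sigma>_def)
  then have sinh: "sinh \<sigma> > 0" and cosh: "cosh \<sigma> - 1 > 0"
    using cosh_gt_1 by auto
  have \<sigma>: "\<beta> * mesh_len x j = \<sigma>" if "j = i \<or> j = i + 1" for j
    using that len by (auto simp: \<beta>_def \<sigma>_def)
  have coef: "coef_d x \<beta> j = \<beta> * cosh \<sigma> / sinh \<sigma>" "coef_a x \<beta> j = \<beta> / sinh \<sigma>"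
    "coef_Dd x \<beta> j = \<beta> * (cosh \<sigma> - 1) / sinh \<sigma>" if "j = i \<or> j = i + 1" for j
    using \<sigma>[OF that] by (simp_all add: coef_Dd_def coef_d_def coef_a_def tanh_def diff_divide_distrib
        right_diff_distrib)
  show ?thesis
    using i \<open>\<beta> > 0\<close> sinh cosh pos
    by (simp add: G_op_def Let_def coef \<beta>_def[symmetric] field_simps)
qed

lemma cosh_ratio_antimono:
  fixes s \<sigma> :: real
  assumes "0 < s" "s \<le> \<sigma>"
  shows "(1 + cosh \<sigma>) / (cosh \<sigma> - 1) \<le> (1 + cosh s) / (cosh s - 1)"
proof -
  have ratio: "(1 + cosh t) / (cosh t - 1) = 1 + 2 / (cosh t - 1)" if "0 < t" for t :: real
  proof -
    have "1 + cosh t = (cosh t - 1) + 2" by simp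
    then show ?thesis using that by (simp only: add_divide_distrib) simp
  qed
  have "cosh s - 1 > 0" using cosh_gt_1[of s] assms by simp
  moreover have "cosh s \<le> cosh \<sigma>" using assms by (simp add: cosh_real_nonneg_le_iff)
  ultimately show ?thesis
    using assms by (simp add: ratio frac_le)
qed

lemma shishkin_mesh_middle:
  assumes "N = 4 * q" "0 < q" "q \<le> j" "j \<le> 3 * q"
  shows "shishkin_mesh lam N j = lam + 2 * (1 - 2 * lam) / real N * (real j - real q)"
proof (cases "j = q")
  case True
  with assms show ?thesis by (simp add: shishkin_mesh_def)
next
  case False
  with assms show ?thesis by (simp add: shishkin_mesh_def field_simps)
qed

lemma shishkin_mesh_middle_neighbours:
  assumes N: "0 < N" "4 dvd N" and lam: "0 < lam"
    and i: "N div 4 \<le> i" "i \<le> N div 2 - 1"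
    and left: "shishkin_mesh lam N (N div 4) \<le> shishkin_mesh lam N (i - 1)"
  defines "x \<equiv> shishkin_mesh lam N" and "h \<equiv> 2 * (1 - 2 * lam) / real N"
  shows "0 < i" "i < N" "x (N div 4) = lam" "x (i - 1) = x i - h" "x (i + 1) = x i + h"
proof -
  obtain q where q: "N = 4 * q" "0 < q" using N by auto
  have Nq: "N div 4 = q" using q by simp
  have xq: "x (N div 4) = lam"
    unfolding Nq x_def using shishkin_mesh_middle[OF q, of q] by simp
  have "N div 4 < i"
  proof (rule ccontr)
    assume "\<not> N div 4 < i"
    then have "i = q" using i q by simp
    then have "x (i - 1) = lam - lam / real q"
      using q by (simp add: x_def shishkin_mesh_def field_simps)
    also have "\<dots> < lam" using lam q by simp
    finally show False using left xq by (simp add: x_def)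
  qed
  then have "q < i" "i + 1 \<le> 2 * q" using i q by auto
  then have mid: "x j = lam + h * (real j - real q)" if "j \<in> {i - 1, i, i + 1}" for j
    using shishkin_mesh_middle[OF q, of j] that by (auto simp: x_def h_def)
  have "real (i - 1) = real i - 1" using \<open>q < i\<close> by simp
  then show "x (i - 1) = x i - h" "x (i + 1) = x i + h"
    using mid[of "i - 1"] mid[of i] mid[of "i + 1"] by (simp_all add: algebra_simps)
  show "0 < i" "i < N" "x (N div 4) = lam" using \<open>q < i\<close> \<open>i + 1 \<le> 2 * q\<close> q xq by auto
qed

locale reaction_term =
  fixes f fy :: "real \<Rightarrow> real \<Rightarrow> real" and m \<gamma> :: real
    and gx gy gxx gxy gyx gyy :: "real \<times> real \<Rightarrow> real"
  assumes f_deriv: "\<And>p. p \<in> {0..1} \<times> UNIV \<Longrightarrow>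
      ((\<lambda>p. f (fst p) (snd p)) has_derivative (\<lambda>(h1, h2). gx p * h1 + gy p * h2)) (at p within {0..1} \<times> UNIV)"
    and gx_deriv: "\<And>p. p \<in> {0..1} \<times> UNIV \<Longrightarrow>
      (gx has_derivative (\<lambda>(h1, h2). gxx p * h1 + gxy p * h2)) (at p within {0..1} \<times> UNIV)"
    and gy_deriv: "\<And>p. p \<in> {0..1} \<times> UNIV \<Longrightarrow>
      (gy has_derivative (\<lambda>(h1, h2). gyx p * h1 + gyy p * h2)) (at p within {0..1} \<times> UNIV)"
    and gxx_cont: "continuous_on ({0..1} \<times> UNIV) gxx" and gxy_cont: "continuous_on ({0..1} \<times> UNIV) gxy"
    and gyx_cont: "continuous_on ({0..1} \<times> UNIV) gyx" and gyy_cont: "continuous_on ({0..1} \<times> UNIV) gyy"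
    and fy: "\<And>x v. x \<in> {0..1} \<Longrightarrow> ((\<lambda>w. f x w) has_real_derivative fy x v) (at v)"
    and m: "m > 0" and fy_ge: "\<And>x v. x \<in> {0..1} \<Longrightarrow> fy x v \<ge> m"
    and fy_le: "\<And>x v. x \<in> {0..1} \<Longrightarrow> fy x v \<le> \<gamma>"
begin

abbreviation strip :: "(real \<times> real) set" where "strip \<equiv> {0..1} \<times> UNIV"
abbreviation open_strip :: "(real \<times> real) set" where "open_strip \<equiv> {0<..<1} \<times> UNIV"

lemma gamma_pos: "\<gamma> > 0"
  using m fy_ge[of 0 0] fy_le[of 0 0] by simp

lemma f_increment_bounds:
  assumes x: "x \<in> {0..1}" and "u \<le> v"
  shows "m * (v - u) \<le> f x v - f x u" "f x v - f x u \<le> \<gamma> * (v - u)"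
proof -
  have "m * (v - u) \<le> f x v - f x u \<and> f x v - f x u \<le> \<gamma> * (v - u)"
  proof (cases "u = v")
    case False
    with \<open>u \<le> v\<close> obtain z where z: "f x v - f x u = (v - u) * fy x z"
      using MVT2[of u v "\<lambda>w. f x w" "fy x"] fy[OF x] by force
    have "m * (v - u) \<le> fy x z * (v - u)" "fy x z * (v - u) \<le> \<gamma> * (v - u)"
      using fy_ge[OF x, of z] fy_le[OF x, of z] \<open>u \<le> v\<close> by (auto intro: mult_right_mono)
    then show ?thesis by (simp add: z mult.commute)
  qed simp
  then show "m * (v - u) \<le> f x v - f x u" "f x v - f x u \<le> \<gamma> * (v - u)" by auto
qed

lemma f_abs_increment_bounds:
  assumes "x \<in> {0..1}"
  shows "m * \<bar>v - u\<bar> \<le> \<bar>f x v - f x u\<bar>" "\<bar>f x v - f x u\<bar> \<le> \<gamma> * \<bar>v - u\<bar>"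
proof -
  have *: "m * \<bar>v - u\<bar> \<le> \<bar>f x v - f x u\<bar> \<and> \<bar>f x v - f x u\<bar> \<le> \<gamma> * \<bar>v - u\<bar>"
    if "u \<le> v" for u v
  proof -
    have "0 \<le> m * (v - u)" using m that by simp
    with f_increment_bounds[OF assms that] that show ?thesis by simp
  qed
  show "m * \<bar>v - u\<bar> \<le> \<bar>f x v - f x u\<bar>" "\<bar>f x v - f x u\<bar> \<le> \<gamma> * \<bar>v - u\<bar>"
    using *[of u v] *[of v u] by (cases "u \<le> v"; simp add: abs_minus_commute)+
qed

lemma ex1_root: assumes x: "x \<in> {0..1}" shows "\<exists>!v. f x v = 0"
proof (rule ex_ex1I)
  have cont: "continuous_on A (\<lambda>w. f x w)" for A
    using fy[OF x] by (meson DERIV_isCont continuous_at_imp_continuous_on)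
  define v where "v = - f x 0 / m"
  show "\<exists>v. f x v = 0"
  proof (cases "0 \<le> v")
    case True
    then have "0 \<le> f x v" using f_increment_bounds(1)[OF x True] m by (simp add: v_def)
    then show ?thesis using IVT'[of "\<lambda>w. f x w" 0 0 v, OF _ _ True cont] True m
      by (auto simp: v_def field_simps)
  next
    case False
    then have "f x v \<le> 0" using f_increment_bounds(1)[OF x, of v 0] m by (simp add: v_def)
    then show ?thesis using IVT'[of "\<lambda>w. f x w" v 0 0, OF _ _ _ cont] False m
      by (auto simp: v_def field_simps)
  qed
next
  fix u v assume "f x u = 0" "f x v = 0"
  with f_abs_increment_bounds(1)[OF x, of v u] m show "u = v"
    by (simp add: mult_le_0_iff)
qed

definition y0 :: "real \<Rightarrow> real" where "y0 x = (THE v. f x v = 0)"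

lemma y0_root: "x \<in> {0..1} \<Longrightarrow> f x (y0 x) = 0"
  unfolding y0_def using ex1_root by (rule theI')

lemma gy_eq_fy:
  assumes x: "x \<in> {0..1}"
  shows "gy (x, v) = fy x v"
proof -
  have "((\<lambda>w. (x, w)) has_derivative (\<lambda>h. (0, h))) (at v)"
    by (intro derivative_eq_intros) auto
  moreover have "((\<lambda>p. f (fst p) (snd p)) has_derivative (\<lambda>(h1, h2). gx (x, v) * h1 + gy (x, v) * h2))
      (at (x, v) within range (\<lambda>w. (x, w)))"
    using f_deriv[of "(x, v)"] x by (auto intro: has_derivative_subset)
  ultimately have "((\<lambda>w. f x w) has_derivative (\<lambda>h. gy (x, v) * h)) (at v)"
    using diff_chain_within by (fastforce simp: o_def)
  then have "((\<lambda>w. f x w) has_real_derivative gy (x, v)) (at v)"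
    by (simp add: has_field_derivative_def)
  then show ?thesis
    using fy[OF x] DERIV_unique by blast
qed

lemma gy_ge: "p \<in> strip \<Longrightarrow> gy p \<ge> m"
  using gy_eq_fy fy_ge by (cases p) auto

lemma gy_nonzero: "p \<in> strip \<Longrightarrow> gy p \<noteq> 0"
  using gy_ge[of p] m by auto

lemma continuous_on_partials: "continuous_on strip gx" "continuous_on strip gy"
  unfolding continuous_on_eq_continuous_within
  using has_derivative_continuous[OF gx_deriv] has_derivative_continuous[OF gy_deriv] by blast+

lemma y0_continuous: "continuous_on {0..1} y0"
  unfolding continuous_on_iff
proof (intro ballI allI impI)
  fix x e :: real assume x: "x \<in> {0..1}" and e: "0 < e"
  have "continuous_on strip (\<lambda>p. f (fst p) (snd p))"
    unfolding continuous_on_eq_continuous_within using has_derivative_continuous[OF f_deriv] by blast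
  then have "continuous_on {0..1} (\<lambda>x'. (\<lambda>p. f (fst p) (snd p)) (x', y0 x))"
    by (rule continuous_on_compose2) (auto intro!: continuous_intros)
  then have "continuous_on {0..1} (\<lambda>x'. f x' (y0 x))" by simp
  then obtain d where "d > 0" and d: "\<forall>x'\<in>{0..1}. dist x' x < d \<longrightarrow> dist (f x' (y0 x)) (f x (y0 x)) < m * e"
    using x e m unfolding continuous_on_iff by (metis mult_pos_pos)
  have "dist (y0 x') (y0 x) < e" if x': "x' \<in> {0..1}" "dist x' x < d" for x'
  proof -
    have "m * \<bar>y0 x' - y0 x\<bar> \<le> \<bar>f x' (y0 x') - f x' (y0 x)\<bar>"
      by (rule f_abs_increment_bounds(1)[OF x'(1)])
    also have "\<dots> = dist (f x' (y0 x)) (f x (y0 x))"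
      using y0_root[OF x] y0_root[OF x'(1)] by (simp add: dist_real_def)
    also have "\<dots> < m * e" using d x' by blast
    finally show ?thesis using m by (simp add: dist_real_def)
  qed
  with \<open>d > 0\<close> show "\<exists>d>0. \<forall>x'\<in>{0..1}. dist x' x < d \<longrightarrow> dist (y0 x') (y0 x) < e" by blast
qed

lemma at_within_strip: "q \<in> open_strip \<Longrightarrow> at q within strip = at q"
  by (rule at_within_open_subset) (auto intro: open_Times)

lemma y0_mean_value:
  assumes x: "x \<in> {0<..<1}" and x': "x' \<in> {0<..<1}"
  obtains r where "r \<in> open_strip" "dist r (x, y0 x) \<le> dist (x', y0 x') (x, y0 x)"
    "gx r * (x' - x) + gy r * (y0 x' - y0 x) = 0"
proof -
  define p where "p = (x, y0 x)"
  define q where "q = (x', y0 x')"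
  define l where "l t = p + t *\<^sub>R (q - p)" for t :: real
  have l_in: "l t \<in> open_strip" if "0 \<le> t" "t \<le> 1" for t
  proof -
    have "convex open_strip" by (intro convex_Times) auto
    then have "(1 - t) *\<^sub>R p + t *\<^sub>R q \<in> open_strip"
      using x x' that by (intro convexD_alt) (auto simp: p_def q_def)
    then show ?thesis by (simp add: l_def algebra_simps)
  qed
  define F where "F = (\<lambda>p :: real \<times> real. f (fst p) (snd p))"
  define D where "D t h = gx (l t) * (h * (x' - x)) + gy (l t) * (h * (y0 x' - y0 x))" for t h :: real
  have dFl: "((F \<circ> l) has_derivative D t) (at t)" if "0 \<le> t" "t \<le> 1" for t
  proof -
    have "(l has_derivative (\<lambda>h. h *\<^sub>R (q - p))) (at t)"
      unfolding l_def by (intro derivative_eq_intros) auto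
    moreover have "(F has_derivative (\<lambda>(h1, h2). gx (l t) * h1 + gy (l t) * h2)) (at (l t))"
      using f_deriv[of "l t"] at_within_strip[OF l_in[OF that]] l_in[OF that] by (auto simp: F_def)
    ultimately show ?thesis
      by (rule diff_chain_at[THEN has_derivative_eq_rhs]) (auto simp: D_def p_def q_def)
  qed
  have "continuous_on {0..1} (F \<circ> l)"
  proof (rule continuous_at_imp_continuous_on, rule ballI)
    fix t :: real assume "t \<in> {0..1}"
    then show "isCont (F \<circ> l) t" by (intro has_derivative_continuous[OF dFl]) auto
  qed
  then obtain \<xi> where \<xi>: "0 < \<xi>" "\<xi> < 1" "(F \<circ> l) 1 - (F \<circ> l) 0 = D \<xi> (1 - 0)"
    using mvt[OF zero_less_one, of "F \<circ> l" D] dFl by (metis less_imp_le)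
  moreover have "(F \<circ> l) 0 = 0" "(F \<circ> l) 1 = 0"
    using y0_root[of x] y0_root[of x'] x x' by (auto simp: F_def l_def p_def q_def)
  moreover have "dist (l \<xi>) p \<le> dist q p"
    using \<xi> by (simp add: l_def dist_norm norm_minus_commute mult_left_le_one_le)
  ultimately show ?thesis
    using that[of "l \<xi>"] l_in[of \<xi>] by (simp add: D_def p_def q_def)
qed

text \<open>Implicit differentiation of \<open>f(x, y\<^sub>0(x)) = 0\<close>: \<open>y\<^sub>0' = - f\<^sub>x / f\<^sub>y\<close>, and \<open>y\<^sub>0''\<close> is the
  derivative of this quotient along the graph of \<open>y\<^sub>0\<close>.\<close>
definition y0' :: "real \<Rightarrow> real" where "y0' x = - (gx (x, y0 x) / gy (x, y0 x))"

definition y0'' :: "real \<Rightarrow> real" where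
  "y0'' x = - (((gxx (x, y0 x) + gxy (x, y0 x) * y0' x) * gy (x, y0 x)
                - gx (x, y0 x) * (gyx (x, y0 x) + gyy (x, y0 x) * y0' x))
               / (gy (x, y0 x) * gy (x, y0 x)))"

lemma continuous_on_along_y0: "continuous_on strip g \<Longrightarrow> continuous_on {0..1} (\<lambda>x. g (x, y0 x))"
  by (rule continuous_on_compose2) (auto intro!: continuous_intros y0_continuous)

text \<open>By \<open>y0_mean_value\<close>, the difference quotients of \<open>y\<^sub>0\<close> are values of \<open>-gx/gy\<close> at points
  converging to \<open>(x, y\<^sub>0 x)\<close>.\<close>
lemma y0_has_derivative:
  assumes x: "x \<in> {0<..<1}"
  shows "(y0 has_real_derivative y0' x) (at x)"
  unfolding has_field_derivative_iff LIM_eq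
proof (intro allI impI)
  fix e :: real assume "0 < e"
  define R where "R q = - (gx q / gy q)" for q
  have "continuous_on strip R"
    unfolding R_def
    by (intro continuous_on_minus continuous_on_divide continuous_on_partials) (use gy_nonzero in auto)
  moreover have "(x, y0 x) \<in> interior strip"
    using x by (simp add: interior_Times)
  ultimately have "isCont R (x, y0 x)"
    by (rule continuous_on_interior)
  then obtain d1 where "d1 > 0" and d1: "\<And>r. dist r (x, y0 x) < d1 \<Longrightarrow> dist (R r) (R (x, y0 x)) < e"
    unfolding continuous_at_eps_delta using \<open>0 < e\<close> by blast
  have "isCont (\<lambda>x. (x, y0 x)) x"
    by (rule continuous_on_interior[of "{0..1}"]) (use x in \<open>auto intro!: continuous_intros y0_continuous\<close>)
  then obtain d2 where "d2 > 0" and d2: "\<And>x'. dist x' x < d2 \<Longrightarrow> dist (x', y0 x') (x, y0 x) < d1"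
    unfolding continuous_at_eps_delta using \<open>d1 > 0\<close> by blast
  define s where "s = min d2 (min x (1 - x))"
  have "norm ((y0 x' - y0 x) / (x' - x) - y0' x) < e" if "x' \<noteq> x" "norm (x' - x) < s" for x'
  proof -
    have "x' \<in> {0<..<1}" "dist x' x < d2" using x that by (auto simp: s_def dist_norm)
    obtain r where r: "r \<in> open_strip" "dist r (x, y0 x) \<le> dist (x', y0 x') (x, y0 x)"
      and eq: "gx r * (x' - x) + gy r * (y0 x' - y0 x) = 0"
      using y0_mean_value[OF x \<open>x' \<in> {0<..<1}\<close>] by blast
    have "dist r (x, y0 x) < d1" using r(2) d2[OF \<open>dist x' x < d2\<close>] by linarith
    have "gy r \<noteq> 0" using gy_nonzero r(1) by auto
    with eq \<open>x' \<noteq> x\<close> have "(y0 x' - y0 x) / (x' - x) = R r"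
      by (simp add: R_def field_simps)
    then show ?thesis using d1[OF \<open>dist r (x, y0 x) < d1\<close>] by (simp add: R_def y0'_def dist_norm)
  qed
  moreover have "s > 0" using \<open>d2 > 0\<close> x by (simp add: s_def)
  ultimately show "\<exists>s>0. \<forall>x'. x' \<noteq> x \<and> norm (x' - x) < s \<longrightarrow> norm ((y0 x' - y0 x) / (x' - x) - y0' x) < e"
    by blast
qed

lemma has_derivative_along_y0:
  assumes x: "x \<in> {0<..<1}"
    and g: "(g has_derivative (\<lambda>(h1, h2). a * h1 + b * h2)) (at (x, y0 x))"
  shows "((\<lambda>x. g (x, y0 x)) has_real_derivative a + b * y0' x) (at x)"
proof -
  have "((\<lambda>x. (x, y0 x)) has_derivative (\<lambda>h. (h, y0' x * h))) (at x)"
    using y0_has_derivative[OF x] by (intro has_derivative_Pair has_derivative_ident)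
      (simp add: has_field_derivative_def)
  from diff_chain_at[OF this g]
  have "((\<lambda>x. g (x, y0 x)) has_derivative (\<lambda>h. a * h + b * (y0' x * h))) (at x)"
    by (simp add: o_def)
  moreover have "(\<lambda>h. a * h + b * (y0' x * h)) = (*) (a + b * y0' x)"
    by (rule ext) (simp add: algebra_simps)
  ultimately show ?thesis by (simp add: has_field_derivative_def)
qed

lemma y0'_has_derivative:
  assumes x: "x \<in> {0<..<1}"
  shows "(y0' has_real_derivative y0'' x) (at x)"
proof -
  have q: "(x, y0 x) \<in> open_strip" using x by auto
  have "((\<lambda>x. gx (x, y0 x)) has_real_derivative gxx (x, y0 x) + gxy (x, y0 x) * y0' x) (at x)"
    using gx_deriv[of "(x, y0 x)"] at_within_strip[OF q] q by (intro has_derivative_along_y0[OF x]) auto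
  moreover have "((\<lambda>x. gy (x, y0 x)) has_real_derivative gyx (x, y0 x) + gyy (x, y0 x) * y0' x) (at x)"
    using gy_deriv[of "(x, y0 x)"] at_within_strip[OF q] q by (intro has_derivative_along_y0[OF x]) auto
  ultimately show ?thesis
    using gy_nonzero[of "(x, y0 x)"] q
    unfolding y0'_def[abs_def] y0''_def by (auto intro!: derivative_eq_intros)
qed

lemma y0''_bounded: "\<exists>K. \<forall>x\<in>{0..1}. \<bar>y0'' x\<bar> \<le> K"
proof -
  have "continuous_on {0..1} y0''"
    unfolding y0''_def y0'_def
    by (intro continuous_on_minus continuous_on_divide continuous_on_mult continuous_on_add
        continuous_on_diff continuous_on_along_y0 continuous_on_partials gxx_cont gxy_cont gyx_cont gyy_cont)
      (use gy_nonzero in auto)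
  then have "bounded (y0'' ` {0..1})"
    by (intro compact_imp_bounded compact_continuous_image) auto
  then show ?thesis by (auto simp: bounded_iff)
qed

lemma sign_times_f_ge:
  assumes s: "\<bar>s\<bar> = 1" and x: "x \<in> {0..1}" and pos: "0 \<le> s * (v - y0 x)"
  shows "m * (s * (v - y0 x)) \<le> s * f x v"
proof (cases "s = 1")
  case True
  with pos f_increment_bounds(1)[OF x, of "y0 x" v] y0_root[OF x] show ?thesis by simp
next
  case False
  with s have "s = -1" by auto
  with pos f_increment_bounds(1)[OF x, of v "y0 x"] y0_root[OF x] show ?thesis
    by (simp add: algebra_simps)
qed

lemma y_minus_y0_convex_above_barrier:
  assumes K: "\<And>x. x \<in> {0..1} \<Longrightarrow> \<bar>y0'' x\<bar> \<le> K" and s: "\<bar>s\<bar> = 1" and x: "x \<in> {0..1}"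
    and ode: "\<epsilon>\<^sup>2 * y'' = f x v" and "0 \<le> b"
    and above: "K / m * \<epsilon>\<^sup>2 + b < s * (v - y0 x)"
  shows "m * b < \<epsilon>\<^sup>2 * (s * (y'' - y0'' x))"
proof -
  have "0 \<le> K / m * \<epsilon>\<^sup>2" using K[OF x] m by simp
  have "m * (K / m * \<epsilon>\<^sup>2 + b) < m * (s * (v - y0 x))"
    using above m by simp
  also have "\<dots> \<le> s * f x v"
    using above \<open>0 \<le> K / m * \<epsilon>\<^sup>2\<close> \<open>0 \<le> b\<close> by (intro sign_times_f_ge[OF s x]) linarith
  finally have "K * \<epsilon>\<^sup>2 + m * b < \<epsilon>\<^sup>2 * (s * y'')"
    using ode m by (simp add: algebra_simps)
  moreover have "s * y0'' x \<le> K"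
    using abs_ge_self[of "s * y0'' x"] K[OF x] s by (simp add: abs_mult)
  then have "\<epsilon>\<^sup>2 * (s * y0'' x) \<le> K * \<epsilon>\<^sup>2"
    using mult_left_mono[of "s * y0'' x" K "\<epsilon>\<^sup>2"] by (simp add: mult.commute)
  moreover have "\<epsilon>\<^sup>2 * (s * (y'' - y0'' x)) = \<epsilon>\<^sup>2 * (s * y'') - \<epsilon>\<^sup>2 * (s * y0'' x)"
    by (simp add: right_diff_distrib)
  ultimately show ?thesis by linarith
qed

text \<open>Comparison with the barrier \<open>K \<epsilon>\<^sup>2 / m + B (exp (- c x) + exp (- c (1 - x)))\<close>,
  \<open>c = \<surd>m / \<epsilon>\<close>: it dominates the boundary values, and \<open>\<epsilon>\<^sup>2 c\<^sup>2 = m\<close> lets the reaction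
  term absorb its curvature.\<close>
lemma y_minus_y0_one_sided:
  fixes y y' y'' :: "real \<Rightarrow> real"
  assumes K: "\<And>x. x \<in> {0..1} \<Longrightarrow> \<bar>y0'' x\<bar> \<le> K" and eps: "0 < \<epsilon>" and s: "\<bar>s\<bar> = 1"
    and y_cont: "continuous_on {0..1} y" and "y 0 = 0" "y 1 = 0"
    and y_ode: "\<forall>x\<in>{0<..<1}. (y has_real_derivative y' x) (at x) \<and>
                              (y' has_real_derivative y'' x) (at x) \<and> \<epsilon>\<^sup>2 * y'' x = f x (y x)"
    and t: "t \<in> {0..1}"
  shows "s * (y t - y0 t) \<le> K / m * \<epsilon>\<^sup>2
           + (\<bar>y0 0\<bar> + \<bar>y0 1\<bar>) * (exp (- (sqrt m / \<epsilon>) * t) + exp (- (sqrt m / \<epsilon>) * (1 - t)))"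
proof -
  define c where "c = sqrt m / \<epsilon>"
  define B where "B = \<bar>y0 0\<bar> + \<bar>y0 1\<bar>"
  define e where "e x = exp (- c * x) + exp (- c * (1 - x))" for x
  define w where "w x = s * (y x - y0 x) - (K / m * \<epsilon>\<^sup>2 + B * e x)" for x
  define w' where "w' x = s * (y' x - y0' x) - B * (- c * exp (- c * x) + c * exp (- c * (1 - x)))" for x
  define w'' where "w'' x = s * (y'' x - y0'' x) - B * (c\<^sup>2 * e x)" for x
  have "0 \<le> B" "0 \<le> K" using K[of 0] by (auto simp: B_def)
  have bc: "w x \<le> 0" if "x \<in> {0, 1}" for x
  proof -
    have "s * (y x - y0 x) \<le> \<bar>s * y0 x\<bar>" using that \<open>y 0 = 0\<close> \<open>y 1 = 0\<close> by auto
    also have "\<dots> \<le> B" using that s by (auto simp: B_def abs_mult)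
    also have "\<dots> \<le> B * e x"
      using mult_left_mono[of 1 "e x" B] that \<open>0 \<le> B\<close> by (auto simp: e_def)
    finally have "s * (y x - y0 x) \<le> B * e x" .
    moreover have "0 \<le> K / m * \<epsilon>\<^sup>2" using \<open>0 \<le> K\<close> m by simp
    ultimately show ?thesis unfolding w_def by linarith
  qed
  have dw: "(w has_real_derivative w' x) (at x)" and dw': "(w' has_real_derivative w'' x) (at x)"
    if "x \<in> {0<..<1}" for x
    using y_ode that y0_has_derivative[OF that] y0'_has_derivative[OF that]
    unfolding w_def w'_def w''_def e_def
    by (auto intro!: derivative_eq_intros simp: algebra_simps power2_eq_square)
  have convex_where_pos: "w'' x > 0" if x: "x \<in> {0<..<1}" and "w x > 0" for x
  proof -
    have "m * (B * e x) < \<epsilon>\<^sup>2 * (s * (y'' x - y0'' x))"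
      using x y_ode \<open>w x > 0\<close> \<open>0 \<le> B\<close>
      by (intro y_minus_y0_convex_above_barrier[OF K s]) (auto simp: w_def e_def)
    moreover have "\<epsilon>\<^sup>2 * c\<^sup>2 = m" using m eps by (simp add: c_def power_divide)
    then have "\<epsilon>\<^sup>2 * (B * (c\<^sup>2 * e x)) = m * (B * e x)"
      by (metis mult.assoc mult.left_commute)
    moreover have "\<epsilon>\<^sup>2 * w'' x = \<epsilon>\<^sup>2 * (s * (y'' x - y0'' x)) - \<epsilon>\<^sup>2 * (B * (c\<^sup>2 * e x))"
      by (simp add: w''_def right_diff_distrib)
    ultimately have "\<epsilon>\<^sup>2 * w'' x > 0" by linarith
    then show ?thesis by (simp add: zero_less_mult_iff)
  qed
  have "continuous_on {0..1} w"
    unfolding w_def e_def by (intro continuous_intros y_cont y0_continuous)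
  then have "w t \<le> 0"
    using bc[of 0] bc[of 1] by (intro nonpos_if_convex_where_pos[OF _ _ _ dw dw' convex_where_pos t]) auto
  then show ?thesis by (simp add: w_def e_def c_def B_def)
qed

lemma y_minus_y0_bound:
  fixes y y' y'' :: "real \<Rightarrow> real"
  assumes "\<And>x. x \<in> {0..1} \<Longrightarrow> \<bar>y0'' x\<bar> \<le> K" and "0 < \<epsilon>"
    and "continuous_on {0..1} y" and "y 0 = 0" "y 1 = 0"
    and "\<forall>x\<in>{0<..<1}. (y has_real_derivative y' x) (at x) \<and>
                      (y' has_real_derivative y'' x) (at x) \<and> \<epsilon>\<^sup>2 * y'' x = f x (y x)"
    and "t \<in> {0..1}"
  shows "\<bar>y t - y0 t\<bar> \<le> K / m * \<epsilon>\<^sup>2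
           + (\<bar>y0 0\<bar> + \<bar>y0 1\<bar>) * (exp (- (sqrt m / \<epsilon>) * t) + exp (- (sqrt m / \<epsilon>) * (1 - t)))"
  using y_minus_y0_one_sided[OF assms(1,2) _ assms(3-7), of 1]
    y_minus_y0_one_sided[OF assms(1,2) _ assms(3-7), of "-1"]
  by (simp add: abs_le_iff)

definition coarse_deviation_const :: "real \<Rightarrow> real \<Rightarrow> real" where
  "coarse_deviation_const K C\<^sub>0 = K / m * C\<^sub>0\<^sup>2 + 2 * (\<bar>y0 0\<bar> + \<bar>y0 1\<bar>)"

definition coarse_residual_const :: "real \<Rightarrow> real \<Rightarrow> real" where
  "coarse_residual_const K C\<^sub>0 =
     \<gamma> * ((1 + cosh (sqrt \<gamma> / C\<^sub>0)) / (cosh (sqrt \<gamma> / C\<^sub>0) - 1)) * (8 * K + 4 * coarse_deviation_const K C\<^sub>0)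
     + 4 * \<gamma> * coarse_deviation_const K C\<^sub>0"

lemma coarse_residual_const_nonneg:
  assumes "0 \<le> K" "0 < C\<^sub>0"
  shows "0 \<le> coarse_residual_const K C\<^sub>0"
proof -
  have "0 \<le> coarse_deviation_const K C\<^sub>0"
    using assms m by (simp add: coarse_deviation_const_def)
  moreover have "1 < cosh (sqrt \<gamma> / C\<^sub>0)"
    using assms gamma_pos by (intro cosh_gt_1) simp
  ultimately show ?thesis
    using assms gamma_pos unfolding coarse_residual_const_def by simp
qed

end

lemma reaction_term_if_C2:
  fixes f fy :: "real \<Rightarrow> real \<Rightarrow> real"
  assumes "Ck_on 2 ({0..1} \<times> UNIV) (\<lambda>p. f (fst p) (snd p))"
    and "\<And>x v. x \<in> {0..1} \<Longrightarrow> ((\<lambda>w. f x w) has_real_derivative fy x v) (at v)"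
    and "m > 0" "\<And>x v. x \<in> {0..1} \<Longrightarrow> fy x v \<ge> m" "\<And>x v. x \<in> {0..1} \<Longrightarrow> fy x v \<le> \<gamma>"
  obtains gx gy gxx gxy gyx gyy where "reaction_term f fy m \<gamma> gx gy gxx gxy gyx gyy"
  by (rule Ck_on_2E[OF assms(1)], rule that, unfold_locales) (assumption | rule assms(2-))+

locale shishkin_problem = reaction_term +
  fixes K C\<^sub>0 \<epsilon> :: real and N :: nat and y y' y'' :: "real \<Rightarrow> real"
  assumes K: "\<And>x. x \<in> {0..1} \<Longrightarrow> \<bar>y0'' x\<bar> \<le> K"
    and C0: "0 < C\<^sub>0" and eps: "0 < \<epsilon>" and N: "0 < N" "4 dvd N"
    and lam_eq: "shishkin_lambda m \<epsilon> N = 2 * \<epsilon> * ln (real N) / sqrt m"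
    and eps_le: "\<epsilon> \<le> C\<^sub>0 / real N"
    and y_cont: "continuous_on {0..1} y" and y_bc: "y 0 = 0" "y 1 = 0"
    and y_ode: "\<forall>x\<in>{0<..<1}. (y has_real_derivative y' x) (at x) \<and>
                              (y' has_real_derivative y'' x) (at x) \<and> \<epsilon>\<^sup>2 * y'' x = f x (y x)"
begin

abbreviation lam :: real where "lam \<equiv> shishkin_lambda m \<epsilon> N"

lemma lam_bounds: "0 < lam" "lam \<le> 1/4"
proof -
  have "1 < real N" using N by (auto elim!: dvdE)
  then show "0 < lam" using eps m by (simp add: lam_eq)
  show "lam \<le> 1/4" by (simp add: shishkin_lambda_def)
qed

lemma y_minus_y0_coarse:
  assumes t: "lam \<le> t" "t \<le> 1 - lam"
  shows "\<bar>y t - y0 t\<bar> \<le> coarse_deviation_const K C\<^sub>0 / (real N)\<^sup>2"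
proof -
  define c where "c = sqrt m / \<epsilon>"
  have "c > 0" using m eps by (simp add: c_def)
  have "c * lam = 2 * ln (real N)" using m eps by (simp add: c_def lam_eq)
  then have exp_le: "exp (- c * s) \<le> 1 / (real N)\<^sup>2" if "lam \<le> s" for s
  proof -
    have "exp (- c * s) \<le> exp (- (c * lam))" using \<open>c > 0\<close> that by (simp add: mult_left_mono)
    also have "\<dots> = 1 / (real N)\<^sup>2" using \<open>c * lam = _\<close> exp_neg_2_ln[of "real N"] N by simp
    finally show ?thesis .
  qed
  have "\<epsilon>\<^sup>2 \<le> C\<^sub>0\<^sup>2 / (real N)\<^sup>2"
    using eps_le eps power_mono[of \<epsilon> "C\<^sub>0 / real N" 2] by (simp add: power_divide)
  have "0 \<le> K" using K[of 0] by auto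
  have "\<bar>y t - y0 t\<bar> \<le> K / m * \<epsilon>\<^sup>2 + (\<bar>y0 0\<bar> + \<bar>y0 1\<bar>) * (exp (- c * t) + exp (- c * (1 - t)))"
    using y_minus_y0_bound[OF K eps y_cont y_bc y_ode] t lam_bounds by (simp add: c_def)
  also have "\<dots> \<le> K / m * (C\<^sub>0\<^sup>2 / (real N)\<^sup>2) + (\<bar>y0 0\<bar> + \<bar>y0 1\<bar>) * (1 / (real N)\<^sup>2 + 1 / (real N)\<^sup>2)"
    using exp_le[of t] exp_le[of "1 - t"] t \<open>\<epsilon>\<^sup>2 \<le> _\<close> \<open>0 \<le> K\<close> m
    by (intro add_mono mult_left_mono) auto
  also have "\<dots> = coarse_deviation_const K C\<^sub>0 / (real N)\<^sup>2"
    using N by (simp add: coarse_deviation_const_def field_simps)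
  finally show ?thesis .
qed

lemma abs_f_y_coarse:
  assumes t: "lam \<le> t" "t \<le> 1 - lam"
  shows "\<bar>f t (y t)\<bar> \<le> \<gamma> * coarse_deviation_const K C\<^sub>0 / (real N)\<^sup>2"
proof -
  have t01: "t \<in> {0..1}" using t lam_bounds by auto
  have "\<bar>f t (y t)\<bar> = \<bar>f t (y t) - f t (y0 t)\<bar>" using y0_root[OF t01] by simp
  also have "\<dots> \<le> \<gamma> * \<bar>y t - y0 t\<bar>" by (rule f_abs_increment_bounds(2)[OF t01])
  also have "\<dots> \<le> \<gamma> * (coarse_deviation_const K C\<^sub>0 / (real N)\<^sup>2)"
    using y_minus_y0_coarse[OF t] gamma_pos by (intro mult_left_mono) auto
  finally show ?thesis by simp
qed

lemma y_second_difference_coarse: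
  assumes a: "lam \<le> a - h" "a + h \<le> 1 - lam" and h: "0 < h" "h \<le> 2 / real N"
  shows "\<bar>y (a - h) - 2 * y a + y (a + h)\<bar> \<le> (8 * K + 4 * coarse_deviation_const K C\<^sub>0) / (real N)\<^sup>2"
proof -
  have sub: "{a - h..a + h} \<subseteq> {0<..<1}" using a lam_bounds by auto
  have "\<bar>y0 (a - h) - 2 * y0 a + y0 (a + h)\<bar> \<le> 2 * K * h\<^sup>2"
    using sub K by (intro second_difference_bound[OF h(1) y0_has_derivative y0'_has_derivative]) auto
  also have "\<dots> \<le> 2 * K * (2 / real N)\<^sup>2"
    using h K[of 0] by (intro mult_left_mono power_mono) auto
  finally have "\<bar>y0 (a - h) - 2 * y0 a + y0 (a + h)\<bar> \<le> 8 * K / (real N)\<^sup>2"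
    by (simp add: power_divide)
  moreover have "\<bar>y (a - h) - y0 (a - h)\<bar> \<le> coarse_deviation_const K C\<^sub>0 / (real N)\<^sup>2"
    "\<bar>y a - y0 a\<bar> \<le> coarse_deviation_const K C\<^sub>0 / (real N)\<^sup>2"
    "\<bar>y (a + h) - y0 (a + h)\<bar> \<le> coarse_deviation_const K C\<^sub>0 / (real N)\<^sup>2"
    using a h by (intro y_minus_y0_coarse; linarith)+
  moreover note abs_second_difference_perturb[of "y (a - h)" "y a" "y (a + h)" "y0 (a - h)" "y0 a" "y0 (a + h)"]
  moreover have "(8 * K + 4 * coarse_deviation_const K C\<^sub>0) / (real N)\<^sup>2
      = 8 * K / (real N)\<^sup>2 + 4 * (coarse_deviation_const K C\<^sub>0 / (real N)\<^sup>2)"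
    by (simp add: add_divide_distrib)
  ultimately show ?thesis by linarith
qed

lemma cosh_ratio_coarse_le:
  assumes "1 / real N \<le> h"
  shows "(1 + cosh (sqrt \<gamma> / \<epsilon> * h)) / (cosh (sqrt \<gamma> / \<epsilon> * h) - 1)
           \<le> (1 + cosh (sqrt \<gamma> / C\<^sub>0)) / (cosh (sqrt \<gamma> / C\<^sub>0) - 1)"
proof (rule cosh_ratio_antimono)
  have "\<epsilon> \<le> C\<^sub>0 * h"
    using eps_le mult_left_mono[OF assms, of C\<^sub>0] C0 by simp
  then show "sqrt \<gamma> / C\<^sub>0 \<le> sqrt \<gamma> / \<epsilon> * h"
    using C0 eps gamma_pos by (simp add: field_simps mult_left_mono)
qed (use C0 gamma_pos in simp)

lemma weighted_second_difference_coarse: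
  assumes a: "lam \<le> a - h" "a + h \<le> 1 - lam" and h: "1 / real N \<le> h" "h \<le> 2 / real N"
  shows "\<bar>\<gamma> * ((1 + cosh (sqrt \<gamma> / \<epsilon> * h)) / (cosh (sqrt \<gamma> / \<epsilon> * h) - 1))
            * (y (a - h) - 2 * y a + y (a + h))\<bar>
         \<le> \<gamma> * ((1 + cosh (sqrt \<gamma> / C\<^sub>0)) / (cosh (sqrt \<gamma> / C\<^sub>0) - 1))
            * ((8 * K + 4 * coarse_deviation_const K C\<^sub>0) / (real N)\<^sup>2)"
    (is "\<bar>\<gamma> * ?Q * ?d\<bar> \<le> \<gamma> * ?Q\<^sub>0 * ?b")
proof -
  have "0 < h" using N by (intro less_le_trans[OF _ h(1)]) simp
  have Q: "0 \<le> ?Q" "?Q \<le> ?Q\<^sub>0"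
    using cosh_ratio_coarse_le[OF h(1)] cosh_real_ge_1[of "sqrt \<gamma> / \<epsilon> * h"] by simp_all
  have "\<gamma> * ?Q \<le> \<gamma> * ?Q\<^sub>0" using gamma_pos by (intro mult_left_mono[OF Q(2)]) simp
  moreover have "\<bar>?d\<bar> \<le> ?b" by (rule y_second_difference_coarse[OF a \<open>0 < h\<close> h(2)])
  moreover have "0 \<le> \<gamma> * ?Q\<^sub>0" using Q gamma_pos by (intro mult_nonneg_nonneg) linarith+
  ultimately have "(\<gamma> * ?Q) * \<bar>?d\<bar> \<le> (\<gamma> * ?Q\<^sub>0) * ?b"
    by (rule mult_mono) simp
  moreover have "0 \<le> \<gamma> * ?Q" using gamma_pos by (intro mult_nonneg_nonneg[OF _ Q(1)]) simp
  then have "\<bar>\<gamma> * ?Q * ?d\<bar> = (\<gamma> * ?Q) * \<bar>?d\<bar>"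
    by (subst abs_mult) (simp only: abs_of_nonneg)
  ultimately show ?thesis by (simp only:)
qed

lemma f_stencil_coarse:
  assumes "lam \<le> a - h" "a + h \<le> 1 - lam" "0 < h"
  shows "\<bar>f (a - h) (y (a - h)) + 2 * f a (y a) + f (a + h) (y (a + h))\<bar>
           \<le> 4 * (\<gamma> * coarse_deviation_const K C\<^sub>0 / (real N)\<^sup>2)"
proof -
  have "\<bar>f (a - h) (y (a - h))\<bar> \<le> \<gamma> * coarse_deviation_const K C\<^sub>0 / (real N)\<^sup>2"
    "\<bar>f a (y a)\<bar> \<le> \<gamma> * coarse_deviation_const K C\<^sub>0 / (real N)\<^sup>2"
    "\<bar>f (a + h) (y (a + h))\<bar> \<le> \<gamma> * coarse_deviation_const K C\<^sub>0 / (real N)\<^sup>2"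
    using assms by (intro abs_f_y_coarse; linarith)+
  then show ?thesis by linarith
qed

lemma G_op_coarse_bound:
  defines "x \<equiv> shishkin_mesh lam N"
  assumes i: "N div 4 \<le> i" "i \<le> N div 2 - 1"
    and pts: "x (i - 1) \<in> {x (N div 4)..1/2}" "x (i + 1) \<in> {x (N div 4)..1/2}"
  shows "\<bar>G_op x N \<epsilon> \<gamma> f (\<lambda>j. y (x j)) i\<bar> \<le> coarse_residual_const K C\<^sub>0 / (real N)\<^sup>2"
proof -
  define h where "h = 2 * (1 - 2 * lam) / real N"
  have mesh: "0 < i" "i < N" "x (N div 4) = lam" "x (i - 1) = x i - h" "x (i + 1) = x i + h"
    using shishkin_mesh_middle_neighbours[OF N lam_bounds(1) i] pts by (auto simp: x_def h_def)
  have h: "1 / real N \<le> h" "h \<le> 2 / real N" "0 < h"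
    using lam_bounds N by (auto simp: h_def divide_right_mono)
  have pts': "lam \<le> x i - h" "x i + h \<le> 1 - lam" using pts mesh lam_bounds by auto
  have "mesh_len x i = h" "mesh_len x (i + 1) = h" using mesh by (simp_all add: mesh_len_def)
  from G_op_uniform_step[OF mesh(1,2) this h(3) eps gamma_pos, where f = f and v = "\<lambda>j. y (x j)"]
  have "G_op x N \<epsilon> \<gamma> f (\<lambda>j. y (x j)) i =
      \<gamma> * ((1 + cosh (sqrt \<gamma> / \<epsilon> * h)) / (cosh (sqrt \<gamma> / \<epsilon> * h) - 1))
        * (y (x i - h) - 2 * y (x i) + y (x i + h))
      - (f (x i - h) (y (x i - h)) + 2 * f (x i) (y (x i)) + f (x i + h) (y (x i + h)))"
    using mesh by simp
  then have "\<bar>G_op x N \<epsilon> \<gamma> f (\<lambda>j. y (x j)) i\<bar>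
      \<le> \<gamma> * ((1 + cosh (sqrt \<gamma> / C\<^sub>0)) / (cosh (sqrt \<gamma> / C\<^sub>0) - 1))
            * ((8 * K + 4 * coarse_deviation_const K C\<^sub>0) / (real N)\<^sup>2)
        + 4 * (\<gamma> * coarse_deviation_const K C\<^sub>0 / (real N)\<^sup>2)"
    using weighted_second_difference_coarse[OF pts' h(1,2)] f_stencil_coarse[OF pts' h(3)]
      abs_triangle_ineq4 by (smt (verit))
  then show ?thesis
    by (simp add: coarse_residual_const_def add_divide_distrib algebra_simps)
qed

end

theorem lemma3:
  fixes f :: "real \<Rightarrow> real \<Rightarrow> real" and fy :: "real \<Rightarrow> real \<Rightarrow> real"
    and k :: nat and m \<gamma> C\<^sub>0 :: real
  assumes k: "k \<ge> 2"
    and f_Ck: "Ck_on k ({0..1} \<times> UNIV) (\<lambda>p. f (fst p) (snd p))"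
    and fy: "\<And>x v. x \<in> {0..1} \<Longrightarrow> ((\<lambda>w. f x w) has_real_derivative fy x v) (at v)"
    and m: "m > 0" and fy_ge: "\<And>x v. x \<in> {0..1} \<Longrightarrow> fy x v \<ge> m"
    and gamma: "\<And>x v. x \<in> {0..1} \<Longrightarrow> \<gamma> \<ge> fy x v"
    and C0: "C\<^sub>0 > 0"
  shows "\<exists>C>0. \<forall>\<epsilon> (N::nat) y y' y''.
     \<epsilon> > 0 \<and> N > 0 \<and> 4 dvd N \<and>
     shishkin_lambda m \<epsilon> N = 2 * \<epsilon> * ln (real N) / sqrt m \<and>
     \<epsilon> \<le> C\<^sub>0 / real N \<and>
     continuous_on {0..1} y \<and> y 0 = 0 \<and> y 1 = 0 \<and>
     (\<forall>x\<in>{0<..<1}. (y has_real_derivative y' x) (at x) \<and>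
                     (y' has_real_derivative y'' x) (at x) \<and>
                     \<epsilon>\<^sup>2 * y'' x = f x (y x))
     \<longrightarrow> (\<forall>i. let x = shishkin_mesh (shishkin_lambda m \<epsilon> N) N in
            N div 4 \<le> i \<and> i \<le> N div 2 - 1 \<and>
            x (i - 1) \<in> {x (N div 4)..1/2} \<and> x i \<in> {x (N div 4)..1/2} \<and>
            x (i + 1) \<in> {x (N div 4)..1/2}
            \<longrightarrow> \<bar>G_op x N \<epsilon> \<gamma> f (\<lambda>j. y (x j)) i\<bar> \<le> C / (real N)\<^sup>2)"
proof -
  obtain gx gy gxx gxy gyx gyy where "reaction_term f fy m \<gamma> gx gy gxx gxy gyx gyy"
    using reaction_term_if_C2[OF Ck_on_mono[OF f_Ck k] fy m fy_ge gamma] by blast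
  then interpret reaction_term f fy m \<gamma> gx gy gxx gxy gyx gyy .
  obtain K where K: "\<And>x. x \<in> {0..1} \<Longrightarrow> \<bar>y0'' x\<bar> \<le> K" using y0''_bounded by blast
  define C where "C = coarse_residual_const K C\<^sub>0 + 1"
  have "0 \<le> K" using K[of 0] by auto
  then have "C > 0" using coarse_residual_const_nonneg[OF _ C0] by (simp add: C_def add_nonneg_pos)
  have G_bound: "\<bar>G_op x N \<epsilon> \<gamma> f (\<lambda>j. y (x j)) i\<bar> \<le> C / (real N)\<^sup>2"
    if "\<epsilon> > 0" "N > 0" "4 dvd N" "shishkin_lambda m \<epsilon> N = 2 * \<epsilon> * ln (real N) / sqrt m"
      "\<epsilon> \<le> C\<^sub>0 / real N" "continuous_on {0..1} y" "y 0 = 0" "y 1 = 0"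
      "\<forall>x\<in>{0<..<1}. (y has_real_derivative y' x) (at x) \<and>
         (y' has_real_derivative y'' x) (at x) \<and> \<epsilon>\<^sup>2 * y'' x = f x (y x)"
      "x = shishkin_mesh (shishkin_lambda m \<epsilon> N) N" "N div 4 \<le> i" "i \<le> N div 2 - 1"
      "x (i - 1) \<in> {x (N div 4)..1/2}" "x (i + 1) \<in> {x (N div 4)..1/2}"
    for \<epsilon> N y y' y'' x i
  proof -
    interpret shishkin_problem f fy m \<gamma> gx gy gxx gxy gyx gyy K C\<^sub>0 \<epsilon> N y y' y''
      using that K C0 by unfold_locales auto
    have "\<bar>G_op x N \<epsilon> \<gamma> f (\<lambda>j. y (x j)) i\<bar> \<le> coarse_residual_const K C\<^sub>0 / (real N)\<^sup>2"
      using G_op_coarse_bound that(11-14) by (simp add: that(10))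
    also have "\<dots> \<le> C / (real N)\<^sup>2" by (simp add: C_def divide_right_mono)
    finally show ?thesis .
  qed
  show ?thesis
    using \<open>C > 0\<close> by (intro exI[of _ C]) (auto simp: Let_def intro!: G_bound)
qed

end
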